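(* Let $\mathscr H$ be a complex Hilbert space and $\mathbf{T}=(T_1,\dots,T_d)\in\mathbb{B}(\mathscr H)^d$. Then for every positive integer $n$, $$w_e(\mathbf{T}^n)\le\sqrt{d}\,w_e^n(\mathbf{T}).$$
   Context: $\mathbb{B}(\mathscr H)$ denotes the bounded linear operators on $\mathscr H$. For $\mathbf{T}=(T_1,\dots,T_d)\in\mathbb{B}(\mathscr H)^d$, $w_e(\mathbf{T})=\sup\{(\sum_{k=1}^d|\langle T_kx,x\rangle|^2)^{1/2}: \|x\|=1\}$ and $\mathbf{T}^n=(T_1^n,\dots,T_d^n)$. *)

theory Defs
  imports "HOL-Analysis.Analysis"
begin

class complex_inner = real_normed_vector +
  fixes scaleC :: "complex \<Rightarrow> 'a \<Rightarrow> 'a" (infixr \<open>*\<^sub>C\<close> 75)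
    and cinner :: "'a \<Rightarrow> 'a \<Rightarrow> complex"
  assumes scaleC_add_right: "a *\<^sub>C (x + y) = a *\<^sub>C x + a *\<^sub>C y"
    and scaleC_add_left: "(a + b) *\<^sub>C x = a *\<^sub>C x + b *\<^sub>C x"
    and scaleC_scaleC: "a *\<^sub>C (b *\<^sub>C x) = (a * b) *\<^sub>C x"
    and scaleC_one: "1 *\<^sub>C x = x"
    and scaleR_scaleC: "scaleR r x = complex_of_real r *\<^sub>C x"
    and cinner_add_left: "cinner (x + y) z = cinner x z + cinner y z"
    and cinner_scaleC_left: "cinner (a *\<^sub>C x) y = a * cinner x y"
    and cinner_commute: "cinner y x = cnj (cinner x y)"
    and cinner_self_norm: "cinner x x = complex_of_real ((norm x)\<^sup>2)"

class chilbert_space = complex_inner + complete_space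

definition cbounded_linear :: "('a::complex_inner \<Rightarrow> 'a) \<Rightarrow> bool" where
  "cbounded_linear T \<longleftrightarrow>
     (\<forall>x y. T (x + y) = T x + T y) \<and>
     (\<forall>c x. T (c *\<^sub>C x) = c *\<^sub>C T x) \<and>
     (\<exists>K. \<forall>x. norm (T x) \<le> K * norm x)"

text \<open>The 0 is inserted so the
  value is 0 on the trivial space (all values are nonnegative, so this does not
  change the supremum otherwise).\<close>
definition joint_numrad :: "nat \<Rightarrow> (nat \<Rightarrow> 'a::complex_inner \<Rightarrow> 'a) \<Rightarrow> real" where
  "joint_numrad d T =
     Sup (insert 0 {sqrt (\<Sum>k<d. (cmod (cinner (T k x) x))\<^sup>2) | x. norm x = 1})"

end

theory Submission
  imports Defs
begin

text \<open>
  Each component obeys Berger's power inequality: if the numerical range of \<open>S\<close> lies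
  in the disc of radius \<open>r\<close>, so does that of \<open>S\<^sup>n\<close>, i.e. \<open>|\<langle>S\<^sup>n x, x\<rangle>| \<le> r\<^sup>n\<close> for unit \<open>x\<close>.
  Following Pearcy, let \<open>c\<^sub>0, \<dots>, c\<^sub>n\<^sub>-\<^sub>1\<close> be the \<open>n\<close>-th roots of \<open>\<zeta>\<close> with \<open>|c\<^sub>k| = 1/r\<close> and put
  \<open>y\<^sub>k = \<Sum>\<^sub>i\<^sub><\<^sub>n c\<^sub>k\<^sup>i S\<^sup>i x\<close>. Then \<open>y\<^sub>k - c\<^sub>k S y\<^sub>k = x - \<zeta> S\<^sup>n x\<close> and \<open>\<Sum>\<^sub>k y\<^sub>k = n x\<close>, so
  \<open>n \<langle>x - \<zeta> S\<^sup>n x, x\<rangle> = \<Sum>\<^sub>k \<langle>y\<^sub>k - c\<^sub>k S y\<^sub>k, y\<^sub>k\<rangle>\<close>, whose real part is nonnegative because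
  \<open>|c\<^sub>k \<langle>S y\<^sub>k, y\<^sub>k\<rangle>| \<le> \<parallel>y\<^sub>k\<parallel>\<^sup>2\<close>. Choosing the phase of \<open>\<zeta>\<close> to make \<open>\<zeta> \<langle>S\<^sup>n x, x\<rangle>\<close> positive gives
  the inequality. Bounding every component of \<open>\<^bold>T\<^sup>n\<close> by \<open>w\<^sub>e(\<^bold>T)\<^sup>n\<close> then costs the factor \<open>\<surd>d\<close>.
\<close>

lemma cinner_add_right: "cinner (x::'a::complex_inner) (y + z) = cinner x y + cinner x z"
  by (metis cinner_commute cinner_add_left complex_cnj_add)

lemma cinner_scaleC_right: "cinner (x::'a::complex_inner) (a *\<^sub>C y) = cnj a * cinner x y"
  by (metis cinner_commute cinner_scaleC_left complex_cnj_mult)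

lemma scaleC_zero_left [simp]: "0 *\<^sub>C (x::'a::complex_inner) = 0"
  by (metis scaleR_scaleC scaleR_zero_left of_real_0)

lemma scaleC_zero_right [simp]: "a *\<^sub>C (0::'a::complex_inner) = 0"
  by (metis add_cancel_right_right add_0 scaleC_add_right)

lemma scaleC_minus1_left: "(-1) *\<^sub>C (x::'a::complex_inner) = - x"
  by (metis scaleR_scaleC scaleR_minus1_left of_real_1 of_real_minus)

lemma cinner_zero_left [simp]: "cinner (0::'a::complex_inner) y = 0"
  by (metis scaleC_zero_left cinner_scaleC_left mult_zero_left)

lemma cinner_minus_left: "cinner (- (x::'a::complex_inner)) y = - cinner x y"
  using cinner_scaleC_left[of "-1" x y] by (simp only: scaleC_minus1_left) simp

lemma cinner_zero_right [simp]: "cinner (x::'a::complex_inner) 0 = 0"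
  by (metis cinner_commute cinner_zero_left complex_cnj_zero)

lemma cinner_diff_left: "cinner ((x::'a::complex_inner) - y) z = cinner x z - cinner y z"
  using cinner_add_left[of x "- y" z] by (simp add: cinner_minus_left)

lemma cinner_diff_right: "cinner (z::'a::complex_inner) (x - y) = cinner z x - cinner z y"
  by (metis cinner_commute cinner_diff_left complex_cnj_diff)

lemma cinner_sum_right: "cinner (x::'a::complex_inner) (\<Sum>k\<in>A. f k) = (\<Sum>k\<in>A. cinner x (f k))"
  by (induction A rule: infinite_finite_induct) (simp_all add: cinner_add_right)

lemma scaleC_sum_left: "(\<Sum>k\<in>A. f k) *\<^sub>C (x::'a::complex_inner) = (\<Sum>k\<in>A. f k *\<^sub>C x)"
  by (induction A rule: infinite_finite_induct) (simp_all add: scaleC_add_left)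

lemma scaleC_sum_right: "a *\<^sub>C (\<Sum>k\<in>A. f k) = (\<Sum>k\<in>A. a *\<^sub>C (f k::'a::complex_inner))"
  by (induction A rule: infinite_finite_induct) (simp_all add: scaleC_add_right)

lemma Re_cinner_self: "Re (cinner (x::'a::complex_inner) x) = (norm x)\<^sup>2"
  by (simp add: cinner_self_norm)

lemma two_cmod_cinner_le: "2 * cmod (cinner (y::'a::complex_inner) x) \<le> (norm y)\<^sup>2 + (norm x)\<^sup>2"
proof -
  define a where "a = cinner y x"
  define c where "c = rcis 1 (Arg a)"
  have ca: "cnj c * a = cmod a"
  proof -
    have "a = rcis (cmod a) (Arg a)" by (simp add: rcis_cmod_Arg)
    then have "cnj c * a = rcis 1 (- Arg a) * rcis (cmod a) (Arg a)"
      by (simp add: c_def rcis_def cis_cnj)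
    also have "\<dots> = cmod a" by (simp add: rcis_mult)
    finally show ?thesis .
  qed
  have cc: "c * cnj c = 1"
    by (metis c_def complex_mod_rcis abs_one complex_norm_square mult.commute of_real_1 power_one)
  have ax: "cinner x y = cnj a" by (simp add: a_def cinner_commute[of x y])
  have "0 \<le> Re (cinner (y - c *\<^sub>C x) (y - c *\<^sub>C x))" by (simp add: Re_cinner_self)
  also have "cinner (y - c *\<^sub>C x) (y - c *\<^sub>C x)
      = cinner y y - cnj c * a - c * cnj a + c * cnj c * cinner x x"
    by (simp add: cinner_diff_left cinner_diff_right cinner_scaleC_right cinner_scaleC_left
          a_def ax algebra_simps)
  also have "\<dots> = cinner y y - 2 * cmod a + cinner x x"
  proof -
    have "c * cnj a = cnj (cnj c * a)" by simp
    then show ?thesis by (simp add: ca cc)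
  qed
  finally show ?thesis by (simp add: Re_cinner_self a_def)
qed

definition clinear :: "('a::complex_inner \<Rightarrow> 'b::complex_inner) \<Rightarrow> bool" where
  "clinear S \<longleftrightarrow> (\<forall>x y. S (x + y) = S x + S y) \<and> (\<forall>c x. S (c *\<^sub>C x) = c *\<^sub>C S x)"

lemma clinear_add: "clinear S \<Longrightarrow> S (x + y) = S x + S y"
  by (simp add: clinear_def)

lemma clinear_scaleC: "clinear S \<Longrightarrow> S (c *\<^sub>C x) = c *\<^sub>C S x"
  by (simp add: clinear_def)

lemma clinear_zero: "clinear S \<Longrightarrow> S 0 = 0"
  by (metis clinear_add add_cancel_right_right add_0)

lemma clinear_sum: "clinear S \<Longrightarrow> S (\<Sum>i\<in>A. f i) = (\<Sum>i\<in>A. S (f i))"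
  by (induction A rule: infinite_finite_induct) (simp_all add: clinear_zero clinear_add)

lemma cbounded_linear_imp_clinear: "cbounded_linear T \<Longrightarrow> clinear T"
  by (simp add: cbounded_linear_def clinear_def)

lemma cis_root_unity_power_neq_1:
  assumes "0 < i" "i < n"
  shows "cis (2 * pi / real n) ^ i \<noteq> 1"
proof
  assume "cis (2 * pi / real n) ^ i = 1"
  moreover have "cis (2 * pi / real n) ^ i = cis (2 * pi * real i / real n)"
    by (simp add: Complex.DeMoivre mult.commute)
  ultimately have eq: "cis (2 * pi * real i / real n) = cis (2 * pi * real 0 / real n)"
    by simp
  have inj: "inj_on (\<lambda>k. cis (2 * pi * real k / real n)) {..<n}"
    using Complex.bij_betw_roots_unity[of n] assms by (simp add: bij_betw_def)
  have "i = 0"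
    using inj_onD[OF inj eq] assms by simp
  then show False
    using assms by simp
qed

lemma sum_power_roots_unity:
  assumes "i < n"
  shows "(\<Sum>k<n. (cis (2 * pi / real n) ^ k) ^ i) = (if i = 0 then of_nat n else 0)"
proof -
  define \<omega> where "\<omega> = cis (2 * pi / real n) ^ i"
  have "cis (2 * pi / real n) ^ n = 1"
    using assms by (simp add: Complex.DeMoivre)
  then have "\<omega> ^ n = 1"
    by (metis \<omega>_def power_mult power_one mult.commute)
  moreover have "i \<noteq> 0 \<Longrightarrow> \<omega> \<noteq> 1"
    using cis_root_unity_power_neq_1 assms by (simp add: \<omega>_def)
  ultimately have "(\<Sum>k<n. \<omega> ^ k) = (if i = 0 then of_nat n else 0)"
    by (auto simp: sum_gp_strict \<omega>_def)
  then show ?thesis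
    by (simp add: \<omega>_def flip: power_mult) (simp add: power_mult mult.commute)
qed

lemma sum_roots_unity_rotated_sums:
  fixes v :: "nat \<Rightarrow> 'a::complex_inner"
  assumes "0 < n"
  shows "(\<Sum>k<n. \<Sum>i<n. (cis (2 * pi / real n) ^ k * z) ^ i *\<^sub>C v i) = of_nat n *\<^sub>C v 0"
proof -
  have "(\<Sum>k<n. \<Sum>i<n. (cis (2 * pi / real n) ^ k * z) ^ i *\<^sub>C v i)
      = (\<Sum>i<n. (z ^ i * (\<Sum>k<n. (cis (2 * pi / real n) ^ k) ^ i)) *\<^sub>C v i)"
    by (subst sum.swap) (simp add: scaleC_sum_left sum_distrib_left power_mult_distrib mult.commute)
  also have "\<dots> = (\<Sum>i<n. if i = 0 then of_nat n *\<^sub>C v 0 else 0)"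
    by (intro sum.cong refl) (simp add: sum_power_roots_unity)
  also have "\<dots> = of_nat n *\<^sub>C v 0"
    using assms by (simp add: sum.delta)
  finally show ?thesis .
qed

lemma clinear_geometric_sum_telescope:
  assumes "clinear S"
  shows "(\<Sum>i<n. c ^ i *\<^sub>C (S ^^ i) x) - c *\<^sub>C S (\<Sum>i<n. c ^ i *\<^sub>C (S ^^ i) x)
    = x - c ^ n *\<^sub>C (S ^^ n) x"
    (is "?y - _ = _")
proof -
  define y where "y = ?y"
  define f where "f i = c ^ i *\<^sub>C (S ^^ i) x" for i
  have "c *\<^sub>C S y = (\<Sum>i<n. f (Suc i))"
    using assms by (simp add: y_def f_def clinear_sum clinear_scaleC scaleC_sum_right scaleC_scaleC
        mult.commute)
  then have "y - c *\<^sub>C S y = (\<Sum>i<n. f i - f (Suc i))"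
    by (simp add: y_def f_def sum_subtractf)
  also have "\<dots> = f 0 - f n"
    by (rule sum_lessThan_telescope')
  finally show ?thesis
    by (simp add: y_def f_def scaleC_one)
qed

lemma Re_cinner_diff_scaleC_nonneg:
  assumes numrange: "\<And>y. cmod (cinner (S y) y) \<le> r * (norm y)\<^sup>2" and "cmod c * r \<le> 1"
  shows "0 \<le> Re (cinner (y - c *\<^sub>C S y) y)"
proof -
  have "Re (c * cinner (S y) y) \<le> cmod c * cmod (cinner (S y) y)"
    using complex_Re_le_cmod[of "c * cinner (S y) y"] by (simp add: norm_mult)
  also have "\<dots> \<le> cmod c * (r * (norm y)\<^sup>2)"
    by (intro mult_left_mono numrange) simp
  also have "\<dots> \<le> (norm y)\<^sup>2"
    using assms(2) mult_right_mono[of "cmod c * r" 1 "(norm y)\<^sup>2"] by (simp add: mult.assoc)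
  finally show ?thesis
    by (simp add: cinner_diff_left cinner_scaleC_left Re_cinner_self)
qed

lemma cmod_cinner_funpow_le_pos:
  assumes S: "clinear S" and r: "0 < r" and n: "0 < n"
    and numrange: "\<And>y. cmod (cinner (S y) y) \<le> r * (norm y)\<^sup>2"
  shows "cmod (cinner ((S ^^ n) x) x) \<le> r ^ n * (norm x)\<^sup>2"
proof -
  define a where "a = cinner ((S ^^ n) x) x"
  define z where "z = rcis (1 / r) (- Arg a / real n)"
  define c where "c k = cis (2 * pi / real n) ^ k * z" for k
  define y where "y k = (\<Sum>i<n. c k ^ i *\<^sub>C (S ^^ i) x)" for k
  define v where "v = x - z ^ n *\<^sub>C (S ^^ n) x"
  have zn_a: "z ^ n * a = cmod a / r ^ n"
  proof -
    have "z ^ n * a = rcis (1 / r ^ n) (- Arg a) * rcis (cmod a) (Arg a)"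
      using n by (simp add: z_def DeMoivre2 power_one_over rcis_cmod_Arg)
    then show ?thesis
      by (simp add: rcis_mult)
  qed
  have cn: "c k ^ n = z ^ n" for k
  proof -
    have "(cis (2 * pi / real n) ^ k) ^ n = (cis (2 * pi / real n) ^ n) ^ k"
      by (simp flip: power_mult add: mult.commute)
    also have "\<dots> = 1"
      using n by (simp add: Complex.DeMoivre)
    finally show ?thesis
      by (simp add: c_def power_mult_distrib)
  qed
  have cmod_c: "cmod (c k) * r = 1" for k
    using r by (simp add: c_def z_def norm_mult norm_power)
  have "of_nat n * cinner v x = cinner v (of_nat n *\<^sub>C x)"
    by (simp add: cinner_scaleC_right)
  also have "\<dots> = cinner v (\<Sum>k<n. y k)"
    using sum_roots_unity_rotated_sums[OF n, of z "\<lambda>i. (S ^^ i) x"] by (simp add: y_def c_def)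
  also have "\<dots> = (\<Sum>k<n. cinner (y k - c k *\<^sub>C S (y k)) (y k))"
    using clinear_geometric_sum_telescope[OF S] by (simp add: cinner_sum_right v_def y_def cn)
  finally have "of_nat n * cinner v x = \<dots>" .
  then have "0 \<le> Re (of_nat n * cinner v x)"
    using Re_cinner_diff_scaleC_nonneg[OF numrange cmod_c[THEN eq_refl]]
    by (simp only: Re_sum) (intro sum_nonneg)
  then have "0 \<le> Re (cinner v x)"
    using n by (simp add: zero_le_mult_iff)
  also have "cinner v x = cinner x x - z ^ n * a"
    by (simp add: v_def a_def cinner_diff_left cinner_scaleC_left)
  finally have "cmod a / r ^ n \<le> (norm x)\<^sup>2"
    by (simp add: zn_a Re_cinner_self)
  then show ?thesis
    using r by (simp add: a_def field_simps)
qed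

text \<open>Berger's power inequality; the case \<open>r = 0\<close> follows from \<open>r > 0\<close> by letting \<open>r\<close> decrease.\<close>

lemma cmod_cinner_funpow_le:
  assumes S: "clinear S" and r: "0 \<le> r" and n: "0 < n"
    and numrange: "\<And>y. cmod (cinner (S y) y) \<le> r * (norm y)\<^sup>2"
  shows "cmod (cinner ((S ^^ n) x) x) \<le> r ^ n * (norm x)\<^sup>2"
proof (rule tendsto_lowerbound)
  show "((\<lambda>s. s ^ n * (norm x)\<^sup>2) \<longlongrightarrow> r ^ n * (norm x)\<^sup>2) (at_right r)"
    by (intro tendsto_intros)
  have bound: "cmod (cinner ((S ^^ n) x) x) \<le> s ^ n * (norm x)\<^sup>2" if "r < s" for s
  proof (rule cmod_cinner_funpow_le_pos[OF S _ n])
    show "0 < s"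
      using r that by simp
    show "cmod (cinner (S y) y) \<le> s * (norm y)\<^sup>2" for y
      using numrange[of y] mult_right_mono[of r s "(norm y)\<^sup>2"] that by simp
  qed
  show "\<forall>\<^sub>F s in at_right r. cmod (cinner ((S ^^ n) x) x) \<le> s ^ n * (norm x)\<^sup>2"
    using eventually_at_right_less[of r] bound by (rule eventually_mono)
qed simp

lemma bdd_above_joint_numrad:
  assumes "\<forall>k<d. cbounded_linear (T k)"
  shows "bdd_above {sqrt (\<Sum>k<d. (cmod (cinner (T k x) x))\<^sup>2) | x. norm x = 1}"
proof -
  have "\<forall>k. \<exists>K. k < d \<longrightarrow> (\<forall>x. norm (T k x) \<le> K * norm x)"
    using assms by (auto simp: cbounded_linear_def)
  then obtain K where K: "\<And>k x. k < d \<Longrightarrow> norm (T k x) \<le> K k * norm x"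
    by metis
  have "cmod (cinner (T k x) x) \<le> ((K k)\<^sup>2 + 1) / 2" if "k < d" "norm x = 1" for k x
  proof -
    have "(norm (T k x))\<^sup>2 \<le> (K k)\<^sup>2"
      using K[of k x] that by (simp add: power_mono)
    then show ?thesis
      using two_cmod_cinner_le[of "T k x" x] that by simp
  qed
  then have "(\<Sum>k<d. (cmod (cinner (T k x) x))\<^sup>2) \<le> (\<Sum>k<d. (((K k)\<^sup>2 + 1) / 2)\<^sup>2)"
    if "norm x = 1" for x
    using that by (intro sum_mono power_mono) auto
  then show ?thesis
    unfolding bdd_above_def by (blast intro: real_sqrt_le_mono)
qed

lemma joint_numrad_nonneg:
  assumes "\<forall>k<d. cbounded_linear (T k)"
  shows "0 \<le> joint_numrad d T"
  unfolding joint_numrad_def using bdd_above_joint_numrad[OF assms] by (intro cSup_upper) auto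

lemma cmod_cinner_le_joint_numrad:
  assumes T: "\<forall>k<d. cbounded_linear (T k)" and k: "k < d" and x: "norm x = 1"
  shows "cmod (cinner (T k x) x) \<le> joint_numrad d T"
proof -
  have "cmod (cinner (T k x) x) \<le> sqrt (\<Sum>k<d. (cmod (cinner (T k x) x))\<^sup>2)"
    by (rule real_le_rsqrt, rule member_le_sum) (use k in auto)
  also have "\<dots> \<le> joint_numrad d T"
    unfolding joint_numrad_def using bdd_above_joint_numrad[OF T] x by (intro cSup_upper) auto
  finally show ?thesis .
qed

lemma cmod_cinner_le_joint_numrad_norm:
  assumes T: "\<forall>k<d. cbounded_linear (T k)" and k: "k < d"
  shows "cmod (cinner (T k x) x) \<le> joint_numrad d T * (norm x)\<^sup>2"
proof (cases "x = 0")
  case True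
  then show ?thesis
    using T k by (simp add: clinear_zero cbounded_linear_imp_clinear)
next
  case False
  define t where "t = 1 / norm x"
  have "cinner (T k (t *\<^sub>R x)) (t *\<^sub>R x) = complex_of_real (t\<^sup>2) * cinner (T k x) x"
    using T k by (simp add: scaleR_scaleC clinear_scaleC cbounded_linear_imp_clinear
        cinner_scaleC_left cinner_scaleC_right power2_eq_square)
  then have "cmod (cinner (T k (t *\<^sub>R x)) (t *\<^sub>R x)) = t\<^sup>2 * cmod (cinner (T k x) x)"
    by (simp add: norm_mult norm_power)
  moreover have "norm (t *\<^sub>R x) = 1"
    using False by (simp add: t_def)
  ultimately have "t\<^sup>2 * cmod (cinner (T k x) x) \<le> joint_numrad d T"
    using cmod_cinner_le_joint_numrad[OF T k] by metis
  then show ?thesis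
    using False by (simp add: t_def field_simps)
qed

lemma joint_numrad_le:
  assumes "0 \<le> b" and "\<And>k x. k < d \<Longrightarrow> norm x = 1 \<Longrightarrow> cmod (cinner (T k x) x) \<le> b"
  shows "joint_numrad d T \<le> sqrt (real d) * b"
  unfolding joint_numrad_def
proof (rule cSup_least)
  fix v
  assume "v \<in> insert 0 {sqrt (\<Sum>k<d. (cmod (cinner (T k x) x))\<^sup>2) | x. norm x = 1}"
  then consider "v = 0" | x where "norm x = 1" "v = sqrt (\<Sum>k<d. (cmod (cinner (T k x) x))\<^sup>2)"
    by auto
  then show "v \<le> sqrt (real d) * b"
  proof cases
    case 1
    then show ?thesis
      using assms(1) by simp
  next
    case 2
    have "(\<Sum>k<d. (cmod (cinner (T k x) x))\<^sup>2) \<le> (\<Sum>k<d. b\<^sup>2)"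
      using assms 2(1) by (intro sum_mono power_mono) auto
    then have "v \<le> sqrt (real d * b\<^sup>2)"
      using 2(2) by (simp add: real_sqrt_le_mono)
    also have "\<dots> = sqrt (real d) * b"
      using assms(1) by (simp add: real_sqrt_mult)
    finally show ?thesis .
  qed
qed simp

theorem theorem2p6:
  fixes T :: "nat \<Rightarrow> 'a::chilbert_space \<Rightarrow> 'a" and d n :: nat
  assumes "d \<ge> 1"
    and "\<forall>k<d. cbounded_linear (T k)"
    and "n \<ge> 1"
  shows "joint_numrad d (\<lambda>k. T k ^^ n) \<le> sqrt (real d) * (joint_numrad d T) ^ n"
proof (rule joint_numrad_le)
  have W: "0 \<le> joint_numrad d T"
    using assms(2) by (rule joint_numrad_nonneg)
  then show "0 \<le> joint_numrad d T ^ n"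
    by simp
  show "cmod (cinner ((T k ^^ n) x) x) \<le> joint_numrad d T ^ n" if "k < d" "norm x = 1" for k x
    using cmod_cinner_funpow_le[OF _ W, of "T k" n x] assms(2,3) that
      cmod_cinner_le_joint_numrad_norm[OF assms(2) that(1)]
    by (simp add: cbounded_linear_imp_clinear)
qed

end
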